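(* Let $D$ be a tournament, $T\subseteq V(D)$ and $k\in\mathbb{N}$. Then $D$ has a $T$-feedback arc set of size at most $k$ if and only if there exists an order $\sigma$ of $V(D)$ with $\mathrm{cost}(\sigma)\le k$.
   Context: A tournament is a digraph with exactly one arc between every pair of distinct vertices. Given a terminal set $T\subseteq V(D)$, a $T$-cycle is a directed cycle containing at least one vertex of $T$. A $T$-feedback arc set is a set $S\subseteq A(D)$ such that $D-S$ (same vertex set, arcs $A(D)\setminus S$) contains no $T$-cycle. For an order $\sigma=(v_1,\dots,v_n)$ of $V(D)$, an arc $v_iv_j$ is forward if $i<j$ and backward if $i>j$. The span of a backward arc $v_rv_l$ ($r>l$) is the interval $[v_l,v_r]=\{v_i: l\le i\le r\}$, and the arc is said to be above every vertex of its span. A backward arc above at least one terminal is called affected, and $\mathrm{cost}(\sigma)$ is the number of affected arcs with respect to $\sigma$. *)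

theory Defs
  imports Main
begin

definition tournament :: "'a set \<Rightarrow> ('a \<times> 'a) set \<Rightarrow> bool" where
  "tournament V A \<longleftrightarrow> finite V \<and> A \<subseteq> V \<times> V \<and> (\<forall>v. (v, v) \<notin> A) \<and>
     (\<forall>u\<in>V. \<forall>v\<in>V. u \<noteq> v \<longrightarrow> ((u, v) \<in> A \<longleftrightarrow> (v, u) \<notin> A))"

definition dicycle :: "'a set \<Rightarrow> ('a \<times> 'a) set \<Rightarrow> 'a list \<Rightarrow> bool" where
  "dicycle V A cs \<longleftrightarrow> length cs \<ge> 2 \<and> distinct cs \<and> set cs \<subseteq> V \<and>
     (\<forall>i < length cs. (cs ! i, cs ! ((i + 1) mod length cs)) \<in> A)"

definition T_cycle :: "'a set \<Rightarrow> ('a \<times> 'a) set \<Rightarrow> 'a set \<Rightarrow> 'a list \<Rightarrow> bool" where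
  "T_cycle V A T cs \<longleftrightarrow> dicycle V A cs \<and> set cs \<inter> T \<noteq> {}"

definition T_fas :: "'a set \<Rightarrow> ('a \<times> 'a) set \<Rightarrow> 'a set \<Rightarrow> ('a \<times> 'a) set \<Rightarrow> bool" where
  "T_fas V A T S \<longleftrightarrow> S \<subseteq> A \<and> (\<nexists>cs. T_cycle V (A - S) T cs)"

text \<open>An order of V is a list enumerating V without repetition; position i corresponds to v_(i+1).\<close>

definition is_order :: "'a set \<Rightarrow> 'a list \<Rightarrow> bool" where
  "is_order V \<sigma> \<longleftrightarrow> distinct \<sigma> \<and> set \<sigma> = V"

definition affected_arcs :: "('a \<times> 'a) set \<Rightarrow> 'a set \<Rightarrow> 'a list \<Rightarrow> ('a \<times> 'a) set" where
  "affected_arcs A T \<sigma> = {(\<sigma> ! r, \<sigma> ! l) | r l. l < r \<and> r < length \<sigma> \<and>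
      (\<sigma> ! r, \<sigma> ! l) \<in> A \<and> (\<exists>i. l \<le> i \<and> i \<le> r \<and> \<sigma> ! i \<in> T)}"

definition cost :: "('a \<times> 'a) set \<Rightarrow> 'a set \<Rightarrow> 'a list \<Rightarrow> nat" where
  "cost A T \<sigma> = card (affected_arcs A T \<sigma>)"

end

theory Submission
  imports Defs "HOL-Library.Transitive_Closure_Table"
begin

text \<open>The affected arcs of any order form a T-feedback arc set. Conversely, given a T-feedback arc
  set S, an order all of whose affected arcs lie in S is built by repeatedly placing a sink strong
  component of the digraph without S last.\<close>

lemma rtrancl_path_nth:
  "rtrancl_path r x xs y \<Longrightarrow> i < length xs \<Longrightarrow> r ((x # xs) ! i) (xs ! i)"
proof (induction arbitrary: i rule: rtrancl_path.induct)
  case (step x y ys z)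
  then show ?case by (cases i) auto
qed simp

lemma dicycle_through_trancl_loop:
  assumes loop: "(t, t) \<in> (Restr E V)\<^sup>+" and irrefl: "\<forall>v. (v, v) \<notin> E"
  shows "\<exists>cs. dicycle V E cs \<and> t \<in> set cs"
proof -
  let ?r = "\<lambda>a b. (a, b) \<in> Restr E V"
  obtain v where tv: "?r t v" and "(v, t) \<in> (Restr E V)\<^sup>*"
    using loop by (meson tranclD)
  then have "?r\<^sup>*\<^sup>* v t" by (simp only: Transitive_Closure.rtranclp_rtrancl_eq)
  then obtain xs where "rtrancl_path ?r v xs t" by (auto simp: rtranclp_eq_rtrancl_path)
  then obtain ys where path: "rtrancl_path ?r v ys t" and dist: "distinct (v # ys)"
    by (rule rtrancl_path_distinct)
  have "ys \<noteq> []"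
  proof
    assume "ys = []"
    then have "v = t" using path by (auto elim: rtrancl_path.cases)
    then show False using tv irrefl by blast
  qed
  have last: "last ys = t" using path \<open>ys \<noteq> []\<close> by (rule rtrancl_path_last)
  let ?cs = "v # ys"
  have steps: "(?cs ! i, ?cs ! ((i + 1) mod length ?cs)) \<in> Restr E V" if "i < length ?cs" for i
  proof (cases "i < length ys")
    case True
    then show ?thesis using rtrancl_path_nth[OF path True] by simp
  next
    case False
    then have "i = length ys" using that by simp
    then show ?thesis using tv last \<open>ys \<noteq> []\<close> by (simp add: last_conv_nth)
  qed
  have "set ?cs \<subseteq> V"
  proof
    fix x assume "x \<in> set ?cs"
    then obtain i where "i < length ?cs" "x = ?cs ! i" by (metis in_set_conv_nth)
    then show "x \<in> V" using steps by blast
  qed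
  moreover have "t \<in> set ?cs" using last_in_set[OF \<open>ys \<noteq> []\<close>] last by simp
  moreover have "2 \<le> length ?cs" using \<open>ys \<noteq> []\<close> by (cases ys) auto
  ultimately show ?thesis using dist steps unfolding dicycle_def by blast
qed

lemma dicycle_successor_neq:
  assumes "dicycle V E cs" and "i < length cs"
  shows "cs ! i \<noteq> cs ! ((i + 1) mod length cs)"
proof -
  have n: "2 \<le> length cs" "distinct cs" using assms(1) unfolding dicycle_def by auto
  have "i \<noteq> (i + 1) mod length cs"
    using n(1) assms(2) by (cases "i + 1 = length cs") auto
  moreover have "(i + 1) mod length cs < length cs" using n(1) by (intro mod_less_divisor) linarith
  ultimately show ?thesis using nth_eq_iff_index_eq[OF n(2) assms(2)] by blast
qed

lemma ex_crossing_step: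
  fixes h :: "nat \<Rightarrow> nat"
  shows "0 < m \<Longrightarrow> p \<le> h 0 \<Longrightarrow> h m \<le> p \<Longrightarrow> \<exists>i<m. p \<le> h i \<and> h (Suc i) \<le> p"
proof (induction m)
  case (Suc m)
  then show ?case by (cases "m = 0 \<or> p \<le> h m") (auto intro: less_SucI)
qed simp

lemma affected_arcsI:
  "l < r \<Longrightarrow> r < length \<sigma> \<Longrightarrow> (\<sigma> ! r, \<sigma> ! l) \<in> A \<Longrightarrow> l \<le> i \<Longrightarrow> i \<le> r \<Longrightarrow> \<sigma> ! i \<in> T
  \<Longrightarrow> (\<sigma> ! r, \<sigma> ! l) \<in> affected_arcs A T \<sigma>"
  unfolding affected_arcs_def by blast

text \<open>Follow a T-cycle from a terminal t. It starts at t and must come back to t, so some arc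
  leaves the positions at or after t for the positions at or before t; such an arc is backward
  with t in its span, hence affected.\<close>

lemma affected_arcs_T_fas:
  assumes "V \<subseteq> set \<sigma>"
  shows "T_fas V A T (affected_arcs A T \<sigma>)"
  unfolding T_fas_def
proof (intro conjI notI)
  let ?S = "affected_arcs A T \<sigma>"
  show "?S \<subseteq> A" unfolding affected_arcs_def by auto
  assume "\<exists>cs. T_cycle V (A - ?S) T cs"
  then obtain cs t where dc: "dicycle V (A - ?S) cs" and "t \<in> set cs" and tT: "t \<in> T"
    unfolding T_cycle_def by blast
  define n where "n = length cs"
  have n2: "2 \<le> n" and csV: "set cs \<subseteq> V"
    and arc: "\<And>i. i < n \<Longrightarrow> (cs ! i, cs ! ((i + 1) mod n)) \<in> A - ?S"
    using dc unfolding dicycle_def n_def by auto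
  have tV: "t \<in> V" using \<open>t \<in> set cs\<close> csV by auto
  obtain j where j: "j < n" "cs ! j = t" using \<open>t \<in> set cs\<close> unfolding n_def by (metis in_set_conv_nth)
  have "\<forall>v\<in>set \<sigma>. \<exists>i. i < length \<sigma> \<and> \<sigma> ! i = v" by (simp add: in_set_conv_nth)
  then obtain pos where pos: "\<And>v. v \<in> set \<sigma> \<Longrightarrow> pos v < length \<sigma> \<and> \<sigma> ! pos v = v"
    by metis
  have posV: "pos v < length \<sigma>" "\<sigma> ! pos v = v" if "v \<in> V" for v
    using pos that assms by auto
  define h where "h i = pos (cs ! ((j + i) mod n))" for i
  have "h 0 = pos t" "h n = pos t" using j n2 by (simp_all add: h_def)
  then obtain i where "i < n" and hi: "pos t \<le> h i" "h (Suc i) \<le> pos t"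
    using ex_crossing_step[of n "pos t" h] n2 by auto
  define x where "x = (j + i) mod n"
  have x: "x < n" using n2 by (simp add: x_def)
  define a where "a = cs ! x"
  define b where "b = cs ! ((x + 1) mod n)"
  have "(j + Suc i) mod n = (x + 1) mod n" by (simp add: x_def mod_Suc_eq)
  then have hab: "pos t \<le> pos a" "pos b \<le> pos t"
    using hi by (simp_all add: h_def x_def a_def b_def)
  have ab: "(a, b) \<in> A - ?S" using arc[OF x] by (simp add: a_def b_def)
  have "cs ! y \<in> V" if "y < n" for y using csV that unfolding n_def by auto
  then have aV: "a \<in> V" and bV: "b \<in> V" using x n2 by (simp_all add: a_def b_def)
  have "a \<noteq> b" using dicycle_successor_neq[OF dc] x by (simp add: a_def b_def n_def)
  then have "pos a \<noteq> pos b" using posV(2)[OF aV] posV(2)[OF bV] by auto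
  then have "pos b < pos a" using hab by linarith
  moreover have "(\<sigma> ! pos a, \<sigma> ! pos b) \<in> A" using ab posV(2)[OF aV] posV(2)[OF bV] by simp
  ultimately have "(\<sigma> ! pos a, \<sigma> ! pos b) \<in> ?S"
    using posV(1)[OF aV] posV(2)[OF tV] tT hab by (intro affected_arcsI[where i = "pos t"]) simp_all
  then show False using ab posV(2)[OF aV] posV(2)[OF bV] by simp
qed

lemma affected_arcs_append:
  "affected_arcs A T (xs @ ys) \<subseteq> affected_arcs A T xs \<union> affected_arcs A T ys \<union> A \<inter> set ys \<times> set xs"
proof
  fix z assume "z \<in> affected_arcs A T (xs @ ys)"
  then obtain r l i where z: "z = ((xs @ ys) ! r, (xs @ ys) ! l)" and lr: "l < r" "r < length (xs @ ys)"
    and zA: "z \<in> A" and i: "l \<le> i" "i \<le> r" "(xs @ ys) ! i \<in> T"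
    unfolding affected_arcs_def by blast
  let ?L = "length xs"
  consider "r < ?L" | "?L \<le> l" | "l < ?L" "?L \<le> r" using not_le by blast
  then show "z \<in> affected_arcs A T xs \<union> affected_arcs A T ys \<union> A \<inter> set ys \<times> set xs"
  proof cases
    case 1
    then have z': "z = (xs ! r, xs ! l)" and "xs ! i \<in> T" using z lr i by (simp_all add: nth_append)
    have "(xs ! r, xs ! l) \<in> affected_arcs A T xs"
      using lr(1) 1 zA[unfolded z'] i(1,2) \<open>xs ! i \<in> T\<close> by (intro affected_arcsI)
    then show ?thesis using z' by blast
  next
    case 2
    then have z': "z = (ys ! (r - ?L), ys ! (l - ?L))" and "ys ! (i - ?L) \<in> T"
      using z lr i by (simp_all add: nth_append)
    have "l - ?L < r - ?L" "r - ?L < length ys" "l - ?L \<le> i - ?L" "i - ?L \<le> r - ?L"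
      using lr i(1,2) 2 by auto
    then have "(ys ! (r - ?L), ys ! (l - ?L)) \<in> affected_arcs A T ys"
      using zA[unfolded z'] \<open>ys ! (i - ?L) \<in> T\<close> by (intro affected_arcsI)
    then show ?thesis using z' by blast
  next
    case 3
    then have "z = (ys ! (r - ?L), xs ! l)" using z by (simp add: nth_append)
    moreover have "ys ! (r - ?L) \<in> set ys" using lr(2) 3(2) by (intro nth_mem) simp
    moreover have "xs ! l \<in> set xs" using 3(1) by (rule nth_mem)
    ultimately show ?thesis using zA by blast
  qed
qed

lemma affected_arcs_eq_empty_if_no_terminal:
  assumes "set \<sigma> \<inter> T = {}"
  shows "affected_arcs A T \<sigma> = {}"
proof (rule equals0I)
  fix z assume "z \<in> affected_arcs A T \<sigma>"
  then obtain r i where "i \<le> r" "r < length \<sigma>" "\<sigma> ! i \<in> T"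
    unfolding affected_arcs_def by blast
  then have "\<sigma> ! i \<in> set \<sigma>" by (intro nth_mem) simp
  then show False using assms \<open>\<sigma> ! i \<in> T\<close> by blast
qed

definition succ_closed_in :: "'a set \<Rightarrow> ('a \<times> 'a) set \<Rightarrow> 'a set \<Rightarrow> bool" where
  "succ_closed_in W E C \<longleftrightarrow> C \<subseteq> W \<and> (\<forall>x\<in>C. \<forall>y\<in>W. (x, y) \<in> E \<longrightarrow> y \<in> C)"

text \<open>A smallest nonempty successor-closed set is a sink strong component: the vertices reachable
  from any of its members form a successor-closed subset, which by minimality is the whole set.\<close>

lemma ex_strongly_connected_succ_closed:
  assumes "finite W" and "W \<noteq> {}"
  obtains C where "C \<noteq> {}" and "succ_closed_in W E C"
    and "\<And>u w. u \<in> C \<Longrightarrow> w \<in> C \<Longrightarrow> (u, w) \<in> (Restr E W)\<^sup>*"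
proof -
  let ?cl = "\<lambda>C. C \<noteq> {} \<and> succ_closed_in W E C"
  have "?cl W" using assms(2) by (simp add: succ_closed_in_def)
  then obtain C where C: "?cl C" and min: "\<And>C'. ?cl C' \<Longrightarrow> card C \<le> card C'"
    using ex_has_least_nat[of ?cl W card] by blast
  have CW: "C \<subseteq> W" using C by (simp add: succ_closed_in_def)
  have "(u, w) \<in> (Restr E W)\<^sup>*" if "u \<in> C" "w \<in> C" for u w
  proof -
    let ?R = "(Restr E W)\<^sup>* `` {u}"
    have RC: "?R \<subseteq> C"
    proof
      fix y assume "y \<in> ?R"
      then have "(u, y) \<in> (Restr E W)\<^sup>*" by simp
      then show "y \<in> C"
        by (induction rule: rtrancl_induct) (use that C in \<open>auto simp: succ_closed_in_def\<close>)
    qed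
    have "?cl ?R" unfolding succ_closed_in_def
    proof (intro conjI ballI impI)
      show "?R \<noteq> {}" by blast
      show "?R \<subseteq> W" using RC CW by blast
      fix x y assume x: "x \<in> ?R" and "y \<in> W" and "(x, y) \<in> E"
      then have "(x, y) \<in> Restr E W" using RC CW by blast
      with x show "y \<in> ?R" by (blast intro: rtrancl_into_rtrancl)
    qed
    then have "?R = C"
      using RC min[of ?R] finite_subset[OF CW assms(1)] by (simp add: card_seteq)
    then show ?thesis using that(2) by auto
  qed
  then show thesis using C that by blast
qed

lemma T_fas_terminal_not_on_loop:
  assumes "T_fas V A T S" and "\<forall>v. (v, v) \<notin> A" and "t \<in> T"
  shows "(t, t) \<notin> (Restr (A - S) V)\<^sup>+"
proof
  assume loop: "(t, t) \<in> (Restr (A - S) V)\<^sup>+"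
  have "\<forall>v. (v, v) \<notin> A - S" using assms(2) by blast
  then obtain cs where "dicycle V (A - S) cs" "t \<in> set cs"
    using dicycle_through_trancl_loop[OF loop] by blast
  then have "T_cycle V (A - S) T cs" using assms(3) unfolding T_cycle_def by blast
  then show False using assms(1) unfolding T_fas_def by blast
qed

text \<open>Arcs from the sink component C back to earlier vertices lie in S, and a terminal in C forces
  C to be a single vertex, since otherwise C would carry a T-cycle.\<close>

lemma T_fas_imp_ex_order:
  assumes "finite V" and "\<forall>v. (v, v) \<notin> A" and "T_fas V A T S" and "W \<subseteq> V"
  shows "\<exists>\<sigma>. is_order W \<sigma> \<and> affected_arcs A T \<sigma> \<subseteq> S"
  using assms(4)
proof (induction "card W" arbitrary: W rule: less_induct)
  case less
  show ?case
  proof (cases "W = {}")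
    case True
    then show ?thesis by (intro exI[of _ "[]"]) (simp add: is_order_def affected_arcs_def)
  next
    case False
    have finW: "finite W" using less.prems assms(1) finite_subset by blast
    obtain C where "C \<noteq> {}" and closed: "succ_closed_in W (A - S) C"
      and strong: "\<And>u w. u \<in> C \<Longrightarrow> w \<in> C \<Longrightarrow> (u, w) \<in> (Restr (A - S) W)\<^sup>*"
      using ex_strongly_connected_succ_closed[OF finW False] by blast
    have CW: "C \<subseteq> W" using closed by (simp add: succ_closed_in_def)
    then have "card (W - C) < card W"
      using \<open>C \<noteq> {}\<close> finW by (intro psubset_card_mono) auto
    then obtain \<sigma>' where \<sigma>': "is_order (W - C) \<sigma>'" "affected_arcs A T \<sigma>' \<subseteq> S"
      using less.hyps[of "W - C"] less.prems by blast
    obtain \<tau> where \<tau>: "is_order C \<tau>" "affected_arcs A T \<tau> = {}"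
    proof (cases "C \<inter> T = {}")
      case True
      obtain \<tau> where "set \<tau> = C" "distinct \<tau>"
        using finite_distinct_list[OF finite_subset[OF CW finW]] by blast
      then show thesis
        using that[of \<tau>] True affected_arcs_eq_empty_if_no_terminal[of \<tau> T A] by (simp add: is_order_def)
    next
      case False
      then obtain t where t: "t \<in> C" "t \<in> T" by blast
      have "C = {t}"
      proof (rule ccontr)
        assume "C \<noteq> {t}"
        then obtain v where v: "v \<in> C" "v \<noteq> t" using t by blast
        have "(t, v) \<in> (Restr (A - S) W)\<^sup>+" using strong[OF t(1) v(1)] v(2) by (simp add: rtrancl_eq_or_trancl)
        then have "(t, t) \<in> (Restr (A - S) W)\<^sup>+" using strong[OF v(1) t(1)] by (rule trancl_rtrancl_trancl)
        moreover have "Restr (A - S) W \<subseteq> Restr (A - S) V" using less.prems by blast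
        ultimately have "(t, t) \<in> (Restr (A - S) V)\<^sup>+" by (rule trancl_mono)
        then show False using T_fas_terminal_not_on_loop[OF assms(3,2) t(2)] by contradiction
      qed
      then show thesis using that[of "[t]"] by (simp add: is_order_def affected_arcs_def)
    qed
    have "is_order W (\<sigma>' @ \<tau>)" using \<sigma>'(1) \<tau>(1) CW by (auto simp: is_order_def)
    moreover have "A \<inter> set \<tau> \<times> set \<sigma>' \<subseteq> S"
      using closed \<sigma>'(1) \<tau>(1) by (auto simp: succ_closed_in_def is_order_def)
    ultimately show ?thesis using affected_arcs_append[of A T \<sigma>' \<tau>] \<sigma>'(2) \<tau>(2) by blast
  qed
qed

theorem proposition1:
  fixes V :: "'a set" and A :: "('a \<times> 'a) set" and T :: "'a set" and k :: nat
  assumes "tournament V A" and "T \<subseteq> V"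
  shows "(\<exists>S. T_fas V A T S \<and> card S \<le> k) \<longleftrightarrow> (\<exists>\<sigma>. is_order V \<sigma> \<and> cost A T \<sigma> \<le> k)"
proof
  assume "\<exists>S. T_fas V A T S \<and> card S \<le> k"
  then obtain S where S: "T_fas V A T S" "card S \<le> k" by blast
  have finV: "finite V" and irrefl: "\<forall>v. (v, v) \<notin> A" and AV: "A \<subseteq> V \<times> V"
    using assms(1) unfolding tournament_def by auto
  obtain \<sigma> where \<sigma>: "is_order V \<sigma>" "affected_arcs A T \<sigma> \<subseteq> S"
    using T_fas_imp_ex_order[OF finV irrefl S(1) order_refl] by blast
  have "finite A" using finite_subset[OF AV] finV by blast
  then have "finite S" using S(1) finite_subset unfolding T_fas_def by blast
  then have "cost A T \<sigma> \<le> card S" unfolding cost_def using \<sigma>(2) by (rule card_mono)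
  then show "\<exists>\<sigma>. is_order V \<sigma> \<and> cost A T \<sigma> \<le> k" using \<sigma>(1) S(2) by auto
next
  assume "\<exists>\<sigma>. is_order V \<sigma> \<and> cost A T \<sigma> \<le> k"
  then obtain \<sigma> where \<sigma>: "is_order V \<sigma>" "cost A T \<sigma> \<le> k" by blast
  then have "T_fas V A T (affected_arcs A T \<sigma>)" by (intro affected_arcs_T_fas) (simp add: is_order_def)
  then show "\<exists>S. T_fas V A T S \<and> card S \<le> k" using \<sigma>(2) unfolding cost_def by blast
qed

end
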